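(* Let $p\ge 1$ and let $(s_n)_{n\in\mathbb{N}}\subset(0,1)$ with $s_n\to0^+$. Let $u\in W^{s_1,p}(\mathbb{T}_T^d)$. Then \[ \lim_{n\to+\infty} s_n\,\mathcal{F}^{s_n}_p(u)=\frac{d\,\omega_d}{p\,T^d}\,\mathcal{F}^0_p(u). \]
   Context: $T>0$, $Q_T=[0,T]^d$. $L^p(\mathbb{T}_T^d)$ is the space of measurable $u:\mathbb{R}^d\to\mathbb{R}$ which are $T$-periodic in each coordinate direction (a.e.) with $u|_{Q_T}\in L^p(Q_T)$. For $s\in(0,1)$, $\mathcal{F}_p^s(u)=\int_{Q_T}\int_{\mathbb{R}^d}\frac{|u(x)-u(y)|^p}{|x-y|^{d+sp}}\,\mathrm{d}y\,\mathrm{d}x$, and $W^{s,p}(\mathbb{T}_T^d)=\{u\in L^p(\mathbb{T}_T^d):\mathcal{F}_p^s(u)<+\infty\}$. $\mathcal{F}_p^0(u)=\int_{Q_T}\int_{Q_T}|u(x)-u(y)|^p\,\mathrm{d}y\,\mathrm{d}x$. $\omega_d$ denotes the Lebesgue measure of the unit ball of $\mathbb{R}^d$ (so $d\omega_d=\mathcal{H}^{d-1}(\mathbb{S}^{d-1})$). *)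

theory Defs
  imports "HOL-Analysis.Analysis"
begin

definition QT :: "real \<Rightarrow> 'a::euclidean_space set" where
  "QT T = cbox 0 (\<Sum>b\<in>Basis. T *\<^sub>R b)"

definition Lp_torus :: "real \<Rightarrow> real \<Rightarrow> ('a::euclidean_space \<Rightarrow> real) \<Rightarrow> bool" where
  "Lp_torus T p u \<longleftrightarrow>
     u \<in> borel_measurable lebesgue \<and>
     (\<forall>b\<in>Basis. AE x in lebesgue. u (x + T *\<^sub>R b) = u x) \<and>
     (\<integral>\<^sup>+ x \<in> QT T. ennreal (\<bar>u x\<bar> powr p) \<partial>lebesgue) < \<infinity>"

definition Fs :: "real \<Rightarrow> real \<Rightarrow> real \<Rightarrow> ('a::euclidean_space \<Rightarrow> real) \<Rightarrow> ennreal" where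
  "Fs T p s u = (\<integral>\<^sup>+ x \<in> QT T. (\<integral>\<^sup>+ y. ennreal (\<bar>u x - u y\<bar> powr p /
        norm (x - y) powr (real DIM('a) + s * p)) \<partial>lebesgue) \<partial>lebesgue)"

definition F0 :: "real \<Rightarrow> real \<Rightarrow> ('a::euclidean_space \<Rightarrow> real) \<Rightarrow> ennreal" where
  "F0 T p u = (\<integral>\<^sup>+ x \<in> QT T. (\<integral>\<^sup>+ y \<in> QT T. ennreal (\<bar>u x - u y\<bar> powr p) \<partial>lebesgue) \<partial>lebesgue)"

definition W_torus :: "real \<Rightarrow> real \<Rightarrow> real \<Rightarrow> ('a::euclidean_space \<Rightarrow> real) \<Rightarrow> bool" where
  "W_torus T s p u \<longleftrightarrow> Lp_torus T p u \<and> Fs T p s u < \<infinity>"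

end

(*
  Replacing u by a Borel representative, the substitution y = x + h and Tonelli turn F_p^s(u) into
  the integral of G(h) |h|^-(d + s p), where G(h) = int_{Q_T} |u(x) - u(x + h)|^p dx is T-periodic,
  and F_p^0(u) into the integral of G over Q_T. Averaging over the centres in Q_T shows that the
  integral of G over a ball of radius r is omega_d r^d T^-d F_p^0(u), up to changing r by T sqrt d.

  For such G, e int G(h) |h|^-(d + e) dh only sees this growth as e -> 0: the part |h| < 1 is bounded
  by the finite integral for e = s_1 p, and for the part |h| >= 1 the layer-cake formula gives
  int_1^oo (d + e) t^-(d+e)-1 N(t) dt with N(t) = int_{1 <= |h| <= t} G ~ omega_d T^-d F_p^0(u) t^d.
*)

theory Submission
  imports Defs
begin

section \<open>Translations and periodicity\<close>

lemma nn_integral_lborel_translate: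
  fixes f :: "'a::euclidean_space \<Rightarrow> ennreal"
  assumes "f \<in> borel_measurable borel"
  shows "(\<integral>\<^sup>+x. f (x + c) \<partial>lborel) = (\<integral>\<^sup>+x. f x \<partial>lborel)"
proof -
  have "(\<integral>\<^sup>+x. f x \<partial>lborel) = (\<integral>\<^sup>+x. f x \<partial>distr lborel borel ((+) c))"
    by (simp add: lborel_distr_plus)
  also have "\<dots> = (\<integral>\<^sup>+x. f (c + x) \<partial>lborel)"
    by (subst nn_integral_distr) (auto simp: assms)
  finally show ?thesis by (simp add: add.commute)
qed

lemma AE_lborel_translate:
  assumes "AE x in lborel. P x"
  shows "AE x in (lborel::'a::euclidean_space measure). P (x + c)"
proof -
  have "AE x in distr lborel borel ((+) c). P x"
    unfolding lborel_distr_plus by (fact assms)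
  then have "AE x in lborel. P (c + x)"
    by (rule AE_distrD[rotated]) simp
  then show ?thesis by (simp add: add.commute)
qed

lemma AE_periodic_nat_multiple:
  fixes f :: "'a::euclidean_space \<Rightarrow> 'b"
  assumes "AE z in lborel. f (z + v) = f z"
  shows "AE z in lborel. f (z + real n *\<^sub>R v) = f z"
proof (induction n)
  case (Suc n)
  have "AE z in lborel. f ((z + real n *\<^sub>R v) + v) = f (z + real n *\<^sub>R v)"
    using AE_lborel_translate[OF assms] .
  with Suc show ?case
    by eventually_elim (simp add: algebra_simps)
qed simp

lemma AE_periodic_int_multiple:
  fixes f :: "'a::euclidean_space \<Rightarrow> 'b"
  assumes "AE z in lborel. f (z + v) = f z"
  shows "AE z in lborel. f (z + real_of_int k *\<^sub>R v) = f z"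
proof (cases "k \<ge> 0")
  case True
  then obtain n where "k = int n" by (metis nonneg_eq_int)
  then show ?thesis using AE_periodic_nat_multiple[OF assms, of n] by simp
next
  case False
  define n where "n = nat (- k)"
  have n: "k = - int n" using False by (simp add: n_def)
  have "AE z in lborel. f ((z - real n *\<^sub>R v) + real n *\<^sub>R v) = f (z - real n *\<^sub>R v)"
    using AE_lborel_translate[OF AE_periodic_nat_multiple[OF assms, of n], of "- real n *\<^sub>R v"]
    by simp
  then show ?thesis by eventually_elim (simp add: n algebra_simps)
qed

lemma standard_hyperplane_null_sets:
  assumes "b \<in> Basis"
  shows "{z::'a::euclidean_space. z \<bullet> b = a} \<in> null_sets lborel"
proof -
  have "{z::'a. z \<bullet> b = a} \<in> null_sets lebesgue"
    using negligible_standard_hyperplane[OF assms] by (simp add: negligible_iff_null_sets)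
  then show ?thesis by (simp add: null_sets_completion_iff)
qed

lemma emeasure_lborel_ball:
  fixes c :: "'a::euclidean_space"
  assumes "r \<ge> 0"
  shows "emeasure lborel (ball c r) = ennreal (r ^ DIM('a) * measure lborel (ball (0::'a) 1))"
proof -
  have "emeasure lborel (ball c r) = ennreal (r ^ DIM('a)) * emeasure lborel (ball (0 :: 'a) 1)"
    using emeasure_lebesgue_ball_conv_unit_ball[OF assms, of c] by simp
  also have "\<dots> = ennreal (r ^ DIM('a) * measure lborel (ball (0::'a) 1))"
    using emeasure_lborel_ball_finite[of "0::'a" 1] assms
    by (subst emeasure_eq_ennreal_measure) (auto simp: ennreal_mult')
  finally show ?thesis .
qed

lemma mem_QT: "x \<in> QT T \<longleftrightarrow> (\<forall>b\<in>Basis. 0 \<le> x \<bullet> b \<and> x \<bullet> b \<le> T)"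
  by (auto simp: QT_def mem_box inner_sum_left inner_Basis if_distrib sum.delta cong: if_cong)

lemma QT_borel [measurable]: "QT T \<in> sets borel"
  unfolding QT_def by simp

lemma emeasure_QT:
  assumes "T \<ge> 0"
  shows "emeasure lborel (QT T :: 'a::euclidean_space set) = ennreal (T ^ DIM('a))"
  using assms unfolding QT_def
  by (subst emeasure_lborel_cbox_eq) (auto simp: inner_sum_left inner_Basis if_distrib sum.delta cong: if_cong)

lemma norm_le_of_mem_QT:
  fixes x :: "'a::euclidean_space"
  assumes "x \<in> QT T" "T \<ge> 0"
  shows "norm x \<le> T * sqrt DIM('a)"
proof -
  have "norm x = sqrt (\<Sum>b\<in>Basis. (x \<bullet> b)\<^sup>2)"
    by (simp add: norm_eq_sqrt_inner euclidean_inner[of x x] power2_eq_square)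
  also have "\<dots> \<le> sqrt (\<Sum>b\<in>(Basis::'a set). T\<^sup>2)"
    using assms by (intro real_sqrt_le_mono sum_mono power_mono) (auto simp: mem_QT)
  also have "\<dots> = T * sqrt DIM('a)"
    using assms by (simp add: real_sqrt_mult)
  finally show ?thesis .
qed

definition slab :: "real \<Rightarrow> 'a::euclidean_space \<Rightarrow> real \<Rightarrow> real \<Rightarrow> 'a set" where
  "slab T b \<alpha> \<beta> = {z. (\<forall>i\<in>Basis. i \<noteq> b \<longrightarrow> 0 \<le> z \<bullet> i \<and> z \<bullet> i \<le> T) \<and> \<alpha> \<le> z \<bullet> b \<and> z \<bullet> b < \<beta>}"

lemma slab_borel [measurable]: "slab T b \<alpha> \<beta> \<in> sets borel"
proof -
  have "slab T b \<alpha> \<beta> = (\<Inter>i\<in>Basis. if i = b then UNIV else {z. 0 \<le> z \<bullet> i} \<inter> {z. z \<bullet> i \<le> T})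
      \<inter> {z. \<alpha> \<le> z \<bullet> b} \<inter> {z. z \<bullet> b < \<beta>}"
    by (auto simp: slab_def split: if_splits)
  also have "\<dots> \<in> sets borel"
    by (intro sets.Int sets.finite_INT)
       (auto intro!: borel_closed closed_halfspace_component_ge closed_halfspace_component_le
         borel_open open_halfspace_component_lt)
  finally show ?thesis .
qed

lemma nn_integral_QT_eq_slab:
  fixes f :: "'a::euclidean_space \<Rightarrow> ennreal"
  assumes "b \<in> Basis"
  shows "(\<integral>\<^sup>+z\<in>QT T. f z \<partial>lborel) = (\<integral>\<^sup>+z\<in>slab T b 0 T. f z \<partial>lborel)"
proof (rule nn_integral_cong_AE)
  have "AE z in lborel. z \<notin> {z::'a. z \<bullet> b = T}"
    using standard_hyperplane_null_sets[OF assms] by (rule AE_not_in)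
  then show "AE z in lborel. f z * indicator (QT T) z = f z * indicator (slab T b 0 T) z"
    by eventually_elim (use assms in \<open>auto simp: mem_QT slab_def less_le indicator_def\<close>)
qed

lemma nn_integral_slab_translate:
  fixes f :: "'a::euclidean_space \<Rightarrow> ennreal"
  assumes [measurable]: "f \<in> borel_measurable borel" and "b \<in> Basis"
  shows "(\<integral>\<^sup>+z\<in>slab T b \<alpha> \<beta>. f (z + c *\<^sub>R b) \<partial>lborel)
       = (\<integral>\<^sup>+y\<in>slab T b (\<alpha> + c) (\<beta> + c). f y \<partial>lborel)"
proof -
  have "(y - c *\<^sub>R b) \<bullet> i = (if i = b then y \<bullet> i - c else y \<bullet> i)" if "i \<in> Basis" for i y
    using assms(2) that by (auto simp: inner_diff_left inner_Basis)
  then have "y - c *\<^sub>R b \<in> slab T b \<alpha> \<beta> \<longleftrightarrow> y \<in> slab T b (\<alpha> + c) (\<beta> + c)" for y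
    using assms(2) by (auto simp: slab_def)
  then have "(\<integral>\<^sup>+z. f (z + c *\<^sub>R b) * indicator (slab T b \<alpha> \<beta>) ((z + c *\<^sub>R b) - c *\<^sub>R b) \<partial>lborel)
       = (\<integral>\<^sup>+y\<in>slab T b (\<alpha> + c) (\<beta> + c). f y \<partial>lborel)"
    by (subst nn_integral_lborel_translate) (auto simp: indicator_def)
  then show ?thesis by simp
qed

lemma nn_integral_slab_split:
  fixes f :: "'a::euclidean_space \<Rightarrow> ennreal"
  assumes [measurable]: "f \<in> borel_measurable borel" and "\<alpha> \<le> \<gamma>" "\<gamma> \<le> \<beta>"
  shows "(\<integral>\<^sup>+y\<in>slab T b \<alpha> \<beta>. f y \<partial>lborel)
       = (\<integral>\<^sup>+y\<in>slab T b \<alpha> \<gamma>. f y \<partial>lborel) + (\<integral>\<^sup>+y\<in>slab T b \<gamma> \<beta>. f y \<partial>lborel)"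
proof -
  have "f y * indicator (slab T b \<alpha> \<beta>) y = f y * indicator (slab T b \<alpha> \<gamma>) y + f y * indicator (slab T b \<gamma> \<beta>) y"
    for y
    using assms(2,3) by (auto simp: slab_def indicator_def)
  then show ?thesis by (simp add: nn_integral_add)
qed

text \<open>Translating by \<open>c b\<close> pushes the top slab of width \<open>c\<close> out of the cube; periodicity
  moves it back to the bottom.\<close>
lemma nn_integral_QT_translate_within_period:
  fixes f :: "'a::euclidean_space \<Rightarrow> ennreal"
  assumes f[measurable]: "f \<in> borel_measurable borel" and b: "b \<in> Basis"
    and per: "AE z in lborel. f (z + T *\<^sub>R b) = f z" and c: "0 \<le> c" "c \<le> T"
  shows "(\<integral>\<^sup>+z\<in>QT T. f (z + c *\<^sub>R b) \<partial>lborel) = (\<integral>\<^sup>+z\<in>QT T. f z \<partial>lborel)"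
proof -
  let ?S = "\<lambda>\<alpha> \<beta>. \<integral>\<^sup>+y\<in>slab T b \<alpha> \<beta>. f y \<partial>lborel"
  have "?S T (T + c) = (\<integral>\<^sup>+z\<in>slab T b 0 c. f (z + T *\<^sub>R b) \<partial>lborel)"
    using nn_integral_slab_translate[OF f b, of T T 0 c] by (simp add: add.commute)
  also have "\<dots> = ?S 0 c"
    using per by (intro nn_integral_cong_AE) (auto elim: eventually_mono)
  finally have wrap: "?S T (T + c) = ?S 0 c" .
  have "(\<integral>\<^sup>+z\<in>QT T. f (z + c *\<^sub>R b) \<partial>lborel) = ?S c (T + c)"
    using nn_integral_QT_eq_slab[OF b, of "\<lambda>z. f (z + c *\<^sub>R b)" T]
      nn_integral_slab_translate[OF f b, of c T 0 T] by simp
  also have "\<dots> = ?S c T + ?S 0 c"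
    using nn_integral_slab_split[OF f, of c T "T + c" T b] c by (simp add: wrap)
  also have "\<dots> = ?S 0 T"
    using nn_integral_slab_split[OF f, of 0 c T T b] c by (simp add: add.commute)
  also have "\<dots> = (\<integral>\<^sup>+z\<in>QT T. f z \<partial>lborel)"
    by (rule nn_integral_QT_eq_slab[OF b, symmetric])
  finally show ?thesis .
qed

lemma nn_integral_QT_translate_periodic_direction:
  fixes f :: "'a::euclidean_space \<Rightarrow> ennreal"
  assumes f[measurable]: "f \<in> borel_measurable borel" and T: "T > 0" and b: "b \<in> Basis"
    and per: "AE z in lborel. f (z + T *\<^sub>R b) = f z"
  shows "(\<integral>\<^sup>+z\<in>QT T. f (z + c *\<^sub>R b) \<partial>lborel) = (\<integral>\<^sup>+z\<in>QT T. f z \<partial>lborel)"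
proof -
  define k where "k = \<lfloor>c / T\<rfloor>"
  define c' where "c' = c - real_of_int k * T"
  have "real_of_int k \<le> c / T" "c / T < real_of_int k + 1"
    unfolding k_def by linarith+
  then have "real_of_int k * T \<le> c" "c < (real_of_int k + 1) * T"
    using T by (simp_all add: field_simps)
  then have c': "0 \<le> c'" "c' \<le> T" unfolding c'_def by (simp_all add: algebra_simps)
  have "AE z in lborel. f ((z + c' *\<^sub>R b) + real_of_int k *\<^sub>R (T *\<^sub>R b)) = f (z + c' *\<^sub>R b)"
    by (rule AE_lborel_translate[OF AE_periodic_int_multiple[OF per]])
  then have "AE z in lborel. f (z + c *\<^sub>R b) = f (z + c' *\<^sub>R b)"
    by eventually_elim (simp add: c'_def algebra_simps)
  then have "(\<integral>\<^sup>+z\<in>QT T. f (z + c *\<^sub>R b) \<partial>lborel) = (\<integral>\<^sup>+z\<in>QT T. f (z + c' *\<^sub>R b) \<partial>lborel)"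
    by (intro nn_integral_cong_AE) (auto elim: eventually_mono)
  also have "\<dots> = (\<integral>\<^sup>+z\<in>QT T. f z \<partial>lborel)"
    by (rule nn_integral_QT_translate_within_period[OF f b per c'])
  finally show ?thesis .
qed

lemma nn_integral_QT_translate_periodic:
  fixes f :: "'a::euclidean_space \<Rightarrow> ennreal"
  assumes f: "f \<in> borel_measurable borel" and T: "T > 0"
    and per: "\<forall>b\<in>Basis. AE z in lborel. f (z + T *\<^sub>R b) = f z"
  shows "(\<integral>\<^sup>+z\<in>QT T. f (z + c) \<partial>lborel) = (\<integral>\<^sup>+z\<in>QT T. f z \<partial>lborel)"
proof -
  have "(\<integral>\<^sup>+z\<in>QT T. f (z + (\<Sum>b\<in>B. (c \<bullet> b) *\<^sub>R b)) \<partial>lborel) = (\<integral>\<^sup>+z\<in>QT T. f z \<partial>lborel)"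
    if "B \<subseteq> Basis" for B
    using finite_subset[OF that finite_Basis] that f per
  proof (induction B arbitrary: f rule: finite_induct)
    case (insert b0 B)
    define g where "g y = f (y + (c \<bullet> b0) *\<^sub>R b0)" for y
    have g[measurable]: "g \<in> borel_measurable borel"
      using insert.prems(2) unfolding g_def by measurable
    have "AE z in lborel. g (z + T *\<^sub>R b) = g z" if "b \<in> Basis" for b
      using AE_lborel_translate[of "\<lambda>z. f (z + T *\<^sub>R b) = f z" "(c \<bullet> b0) *\<^sub>R b0"] insert.prems(3) that
      unfolding g_def by (simp add: algebra_simps)
    then have "(\<integral>\<^sup>+z\<in>QT T. g (z + (\<Sum>b\<in>B. (c \<bullet> b) *\<^sub>R b)) \<partial>lborel) = (\<integral>\<^sup>+z\<in>QT T. g z \<partial>lborel)"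
      using insert by (intro insert.IH) auto
    also have "\<dots> = (\<integral>\<^sup>+z\<in>QT T. f z \<partial>lborel)"
      unfolding g_def using insert.prems by (intro nn_integral_QT_translate_periodic_direction[OF _ T]) auto
    finally show ?case
      using insert.hyps by (simp add: g_def algebra_simps)
  qed simp
  from this[of Basis] show ?thesis by (simp add: euclidean_representation)
qed

section \<open>Reduction to the increment function\<close>

definition cube_increment :: "real \<Rightarrow> real \<Rightarrow> ('a::euclidean_space \<Rightarrow> real) \<Rightarrow> 'a \<Rightarrow> ennreal" where
  "cube_increment T p v h = (\<integral>\<^sup>+x\<in>QT T. ennreal (\<bar>v x - v (x + h)\<bar> powr p) \<partial>lborel)"

lemma cube_increment_measurable [measurable]:
  assumes [measurable]: "v \<in> borel_measurable borel"
  shows "cube_increment T p v \<in> borel_measurable borel"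
  unfolding cube_increment_def by measurable

lemma cube_increment_periodic:
  assumes [measurable]: "v \<in> borel_measurable borel" and per: "AE z in lborel. v (z + T *\<^sub>R b) = v z"
  shows "cube_increment T p v (h + T *\<^sub>R b) = cube_increment T p v h"
  unfolding cube_increment_def
  using AE_lborel_translate[OF per, of h]
  by (intro nn_integral_cong_AE) (auto elim!: eventually_mono simp: add.assoc)

definition singular_integral :: "('a::euclidean_space \<Rightarrow> ennreal) \<Rightarrow> real \<Rightarrow> ennreal" where
  "singular_integral G e = (\<integral>\<^sup>+h. G h * ennreal (1 / norm h powr (real DIM('a) + e)) \<partial>lborel)"

lemma Fs_eq_singular_integral:
  fixes v :: "'a::euclidean_space \<Rightarrow> real"
  assumes [measurable]: "v \<in> borel_measurable borel"
  shows "Fs T p s v = singular_integral (cube_increment T p v) (s * p)"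
proof -
  let ?k = "\<lambda>h. ennreal (1 / norm h powr (real DIM('a) + s * p))"
  have "Fs T p s v = (\<integral>\<^sup>+x\<in>QT T. (\<integral>\<^sup>+y. ennreal (\<bar>v x - v y\<bar> powr p) * ?k (x - y) \<partial>lborel) \<partial>lborel)"
    unfolding Fs_def nn_integral_completion
    by (intro nn_integral_cong) (simp add: ennreal_mult'[symmetric] divide_inverse)
  also have "\<dots> = (\<integral>\<^sup>+x\<in>QT T. (\<integral>\<^sup>+h. ennreal (\<bar>v x - v (x + h)\<bar> powr p) * ?k h \<partial>lborel) \<partial>lborel)"
  proof -
    have "(\<integral>\<^sup>+y. ennreal (\<bar>v x - v y\<bar> powr p) * ?k (x - y) \<partial>lborel)
        = (\<integral>\<^sup>+h. ennreal (\<bar>v x - v (x + h)\<bar> powr p) * ?k h \<partial>lborel)" for x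
      using nn_integral_lborel_translate[of "\<lambda>y. ennreal (\<bar>v x - v y\<bar> powr p) * ?k (x - y)" x]
      by (simp add: add.commute)
    then show ?thesis by simp
  qed
  also have "\<dots> = (\<integral>\<^sup>+x. (\<integral>\<^sup>+h. ennreal (\<bar>v x - v (x + h)\<bar> powr p) * indicator (QT T) x * ?k h \<partial>lborel) \<partial>lborel)"
    by (subst nn_integral_multc[symmetric]) (auto intro!: nn_integral_cong simp: mult_ac)
  also have "\<dots> = (\<integral>\<^sup>+h. (\<integral>\<^sup>+x. ennreal (\<bar>v x - v (x + h)\<bar> powr p) * indicator (QT T) x * ?k h \<partial>lborel) \<partial>lborel)"
    by (rule lborel_pair.Fubini') measurable
  also have "\<dots> = singular_integral (cube_increment T p v) (s * p)"
    unfolding singular_integral_def cube_increment_def by (simp add: nn_integral_multc)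
  finally show ?thesis .
qed

lemma F0_eq_cube_increment:
  fixes v :: "'a::euclidean_space \<Rightarrow> real"
  assumes [measurable]: "v \<in> borel_measurable borel" and T: "T > 0"
    and per: "\<forall>b\<in>Basis. AE z in lborel. v (z + T *\<^sub>R b) = v z"
  shows "F0 T p v = (\<integral>\<^sup>+h\<in>QT T. cube_increment T p v h \<partial>lborel)"
proof -
  have inner: "(\<integral>\<^sup>+y\<in>QT T. ennreal (\<bar>v x - v y\<bar> powr p) \<partial>lborel)
      = (\<integral>\<^sup>+h\<in>QT T. ennreal (\<bar>v x - v (h + x)\<bar> powr p) \<partial>lborel)" for x
    using per
    by (intro nn_integral_QT_translate_periodic[symmetric, OF _ T]) (auto elim!: eventually_mono)
  have "F0 T p v = (\<integral>\<^sup>+x\<in>QT T. (\<integral>\<^sup>+h\<in>QT T. ennreal (\<bar>v x - v (x + h)\<bar> powr p) \<partial>lborel) \<partial>lborel)"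
    unfolding F0_def nn_integral_completion inner by (simp add: add.commute)
  also have "\<dots> = (\<integral>\<^sup>+x. (\<integral>\<^sup>+h. ennreal (\<bar>v x - v (x + h)\<bar> powr p)
      * indicator (QT T) x * indicator (QT T) h \<partial>lborel) \<partial>lborel)"
    by (subst nn_integral_multc[symmetric]) (auto intro!: nn_integral_cong simp: mult_ac)
  also have "\<dots> = (\<integral>\<^sup>+h. (\<integral>\<^sup>+x. ennreal (\<bar>v x - v (x + h)\<bar> powr p)
      * indicator (QT T) x * indicator (QT T) h \<partial>lborel) \<partial>lborel)"
    by (rule lborel_pair.Fubini') measurable
  also have "\<dots> = (\<integral>\<^sup>+h\<in>QT T. cube_increment T p v h \<partial>lborel)"
    unfolding cube_increment_def by (simp add: nn_integral_multc)
  finally show ?thesis .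
qed

lemma powr_abs_diff_le:
  fixes a b p :: real
  assumes "p > 0"
  shows "\<bar>a - b\<bar> powr p \<le> 2 powr p * (\<bar>a\<bar> powr p + \<bar>b\<bar> powr p)"
proof -
  have "\<bar>a - b\<bar> powr p \<le> (2 * max \<bar>a\<bar> \<bar>b\<bar>) powr p"
    using assms by (intro powr_mono2) auto
  also have "\<dots> = 2 powr p * max \<bar>a\<bar> \<bar>b\<bar> powr p"
    by (simp add: powr_mult)
  also have "max \<bar>a\<bar> \<bar>b\<bar> powr p \<le> \<bar>a\<bar> powr p + \<bar>b\<bar> powr p"
    by (simp add: max_def)
  finally show ?thesis by (simp add: mult_left_mono)
qed

lemma F0_finite:
  fixes v :: "'a::euclidean_space \<Rightarrow> real"
  assumes [measurable]: "v \<in> borel_measurable borel" and T: "T > 0" and p: "p > 0"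
    and Lp: "(\<integral>\<^sup>+x\<in>QT T. ennreal (\<bar>v x\<bar> powr p) \<partial>lborel) < \<infinity>"
  shows "F0 T p v < \<infinity>"
proof -
  let ?I = "\<integral>\<^sup>+x\<in>QT T. ennreal (\<bar>v x\<bar> powr p) \<partial>lborel"
  let ?m = "emeasure lborel (QT T :: 'a set)"
  have inner: "(\<integral>\<^sup>+y\<in>QT T. ennreal (\<bar>v x - v y\<bar> powr p) \<partial>lborel)
      \<le> ennreal (2 powr p) * (ennreal (\<bar>v x\<bar> powr p) * ?m + ?I)"
    for x
  proof -
    have "(\<integral>\<^sup>+y\<in>QT T. ennreal (\<bar>v x - v y\<bar> powr p) \<partial>lborel)
        \<le> (\<integral>\<^sup>+y. ennreal (2 powr p) * (ennreal (\<bar>v x\<bar> powr p) * indicator (QT T) y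
            + ennreal (\<bar>v y\<bar> powr p) * indicator (QT T) y) \<partial>lborel)"
      using powr_abs_diff_le[OF p, of "v x"]
      by (intro nn_integral_mono)
        (auto simp: indicator_def ennreal_mult'[symmetric] ennreal_plus[symmetric] simp del: ennreal_plus)
    also have "\<dots> = ennreal (2 powr p) * (ennreal (\<bar>v x\<bar> powr p) * ?m + ?I)"
      by (simp add: nn_integral_cmult nn_integral_add nn_integral_cmult_indicator)
    finally show ?thesis .
  qed
  have "F0 T p v \<le> (\<integral>\<^sup>+x\<in>QT T. ennreal (2 powr p) * (ennreal (\<bar>v x\<bar> powr p) * ?m + ?I) \<partial>lborel)"
    unfolding F0_def nn_integral_completion
    using inner by (intro nn_integral_mono) (auto simp: indicator_def)
  also have "\<dots> = (\<integral>\<^sup>+x. ennreal (2 powr p) * (ennreal (\<bar>v x\<bar> powr p) * indicator (QT T) x * ?m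
      + ?I * indicator (QT T) x) \<partial>lborel)"
    by (intro nn_integral_cong) (simp add: algebra_simps)
  also have "\<dots> = ennreal (2 powr p) * (?I * ?m + ?I * ?m)"
    by (simp add: nn_integral_cmult nn_integral_add nn_integral_multc nn_integral_cmult_indicator)
  also have "\<dots> < \<infinity>"
    using Lp T by (simp add: emeasure_QT ennreal_mult_less_top)
  finally show ?thesis .
qed

lemma Fs_cong_AE:
  assumes "AE x in lborel. u x = v x"
  shows "Fs T p s u = Fs T p s v"
proof -
  have uv: "AE x in lebesgue. u x = v x"
    using assms by (rule AE_completion)
  have "AE x in lebesgue. (\<integral>\<^sup>+y. ennreal (\<bar>u x - u y\<bar> powr p / norm (x - y) powr (real DIM('a) + s * p)) \<partial>lebesgue)
      = (\<integral>\<^sup>+y. ennreal (\<bar>v x - v y\<bar> powr p / norm (x - y) powr (real DIM('a) + s * p)) \<partial>lebesgue)"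
    using uv by eventually_elim (use uv in \<open>auto intro!: nn_integral_cong_AE elim: eventually_mono\<close>)
  then show ?thesis
    unfolding Fs_def by (auto intro!: nn_integral_cong_AE elim: eventually_mono)
qed

lemma F0_cong_AE:
  assumes "AE x in lborel. u x = v x"
  shows "F0 T p u = F0 T p v"
proof -
  have uv: "AE x in lebesgue. u x = v x"
    using assms by (rule AE_completion)
  have "AE x in lebesgue. (\<integral>\<^sup>+y\<in>QT T. ennreal (\<bar>u x - u y\<bar> powr p) \<partial>lebesgue)
      = (\<integral>\<^sup>+y\<in>QT T. ennreal (\<bar>v x - v y\<bar> powr p) \<partial>lebesgue)"
    using uv by eventually_elim (use uv in \<open>auto intro!: nn_integral_cong_AE elim: eventually_mono\<close>)
  then show ?thesis
    unfolding F0_def by (auto intro!: nn_integral_cong_AE elim: eventually_mono)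
qed

lemma Lp_torus_borel_representative:
  fixes u :: "'a::euclidean_space \<Rightarrow> real"
  assumes "Lp_torus T p u"
  obtains v where "v \<in> borel_measurable borel" "AE x in lborel. u x = v x"
    "\<forall>b\<in>Basis. AE z in lborel. v (z + T *\<^sub>R b) = v z"
    "(\<integral>\<^sup>+x\<in>QT T. ennreal (\<bar>v x\<bar> powr p) \<partial>lborel) < \<infinity>"
proof -
  have um: "u \<in> borel_measurable lebesgue" and per: "\<forall>b\<in>Basis. AE x in lebesgue. u (x + T *\<^sub>R b) = u x"
    and Lp: "(\<integral>\<^sup>+x\<in>QT T. ennreal (\<bar>u x\<bar> powr p) \<partial>lebesgue) < \<infinity>"
    using assms unfolding Lp_torus_def by auto
  obtain v where v: "v \<in> borel_measurable lborel" and uv: "AE x in lborel. u x = v x"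
    using completion_ex_borel_measurable_real[OF um] by blast
  have "AE z in lborel. v (z + T *\<^sub>R b) = v z" if "b \<in> Basis" for b
  proof -
    have "AE z in lborel. u (z + T *\<^sub>R b) = u z"
      using per that by (simp add: AE_completion_iff)
    with uv AE_lborel_translate[OF uv, of "T *\<^sub>R b"] show ?thesis
      by eventually_elim simp
  qed
  moreover have "(\<integral>\<^sup>+x\<in>QT T. ennreal (\<bar>v x\<bar> powr p) \<partial>lborel) = (\<integral>\<^sup>+x\<in>QT T. ennreal (\<bar>u x\<bar> powr p) \<partial>lebesgue)"
    unfolding nn_integral_completion using uv by (intro nn_integral_cong_AE) (auto elim: eventually_mono)
  ultimately show ?thesis
    using that v uv Lp by simp
qed

section \<open>Ball integrals of periodic functions\<close>

lemma ball_borel [measurable]: "ball (z::'a::euclidean_space) r \<in> sets borel"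
  by (simp add: borel_open)

lemma nn_integral_QT_ball_periodic:
  fixes G :: "'a::euclidean_space \<Rightarrow> ennreal"
  assumes G[measurable]: "G \<in> borel_measurable borel" and T: "T > 0"
    and per: "\<forall>b\<in>Basis. \<forall>h. G (h + T *\<^sub>R b) = G h" and r: "r \<ge> 0"
  shows "(\<integral>\<^sup>+z\<in>QT T. (\<integral>\<^sup>+y\<in>ball z r. G y \<partial>lborel) \<partial>lborel)
       = (\<integral>\<^sup>+h\<in>QT T. G h \<partial>lborel) * ennreal (r ^ DIM('a) * measure lborel (ball (0::'a) 1))"
proof -
  have ball: "(\<integral>\<^sup>+y\<in>ball z r. G y \<partial>lborel) = (\<integral>\<^sup>+h\<in>ball 0 r. G (h + z) \<partial>lborel)" for z
  proof -
    have "(\<integral>\<^sup>+h\<in>ball 0 r. G (h + z) \<partial>lborel) = (\<integral>\<^sup>+h. G (h + z) * indicator (ball z r) (h + z) \<partial>lborel)"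
      by (intro nn_integral_cong) (auto simp: indicator_def dist_norm)
    also have "\<dots> = (\<integral>\<^sup>+y\<in>ball z r. G y \<partial>lborel)"
      by (rule nn_integral_lborel_translate) measurable
    finally show ?thesis ..
  qed
  have cube: "(\<integral>\<^sup>+z\<in>QT T. G (z + h) \<partial>lborel) = (\<integral>\<^sup>+h\<in>QT T. G h \<partial>lborel)" for h
    using per by (intro nn_integral_QT_translate_periodic[OF G T]) auto
  have "(\<integral>\<^sup>+z\<in>QT T. (\<integral>\<^sup>+y\<in>ball z r. G y \<partial>lborel) \<partial>lborel)
      = (\<integral>\<^sup>+z. (\<integral>\<^sup>+h. G (h + z) * indicator (ball 0 r) h * indicator (QT T) z \<partial>lborel) \<partial>lborel)"
    unfolding ball by (subst nn_integral_multc[symmetric]) auto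
  also have "\<dots> = (\<integral>\<^sup>+h. (\<integral>\<^sup>+z\<in>QT T. G (h + z) * indicator (ball 0 r) h \<partial>lborel) \<partial>lborel)"
    by (rule lborel_pair.Fubini') measurable
  also have "\<dots> = (\<integral>\<^sup>+h\<in>ball 0 r. (\<integral>\<^sup>+z\<in>QT T. G (z + h) \<partial>lborel) \<partial>lborel)"
    by (subst nn_integral_multc[symmetric]) (auto intro!: nn_integral_cong simp: add.commute mult_ac)
  also have "\<dots> = (\<integral>\<^sup>+h\<in>QT T. G h \<partial>lborel) * emeasure lborel (ball (0::'a) r)"
    unfolding cube by (rule nn_integral_cmult_indicator) simp
  also have "\<dots> = (\<integral>\<^sup>+h\<in>QT T. G h \<partial>lborel) * ennreal (r ^ DIM('a) * measure lborel (ball (0::'a) 1))"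
    using r by (simp add: emeasure_lborel_ball)
  finally show ?thesis .
qed

lemma ennreal_mult_divide_cancel:
  assumes "c > 0"
  shows "ennreal c * ennreal (y / c) = ennreal y"
proof (cases "y \<ge> 0")
  case False
  then have "y / c \<le> 0" using assms by (simp add: divide_nonpos_pos)
  then show ?thesis using False by (simp add: ennreal_neg)
qed (use assms in \<open>simp add: ennreal_mult[symmetric]\<close>)

lemma ennreal_le_divide_iff:
  assumes "c > 0"
  shows "x \<le> ennreal (y / c) \<longleftrightarrow> ennreal c * x \<le> ennreal y"
  using assms ennreal_mult_le_mult_iff[of "ennreal c" x "ennreal (y / c)"]
  by (simp add: ennreal_mult_divide_cancel)

lemma ennreal_divide_le_iff:
  assumes "c > 0"
  shows "ennreal (y / c) \<le> x \<longleftrightarrow> ennreal y \<le> ennreal c * x"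
  using assms ennreal_mult_le_mult_iff[of "ennreal c" "ennreal (y / c)" x]
  by (simp add: ennreal_mult_divide_cancel)

lemma nn_integral_QT_const:
  assumes "T \<ge> 0"
  shows "(\<integral>\<^sup>+(z::'a::euclidean_space)\<in>QT T. c \<partial>lborel) = ennreal (T ^ DIM('a)) * c"
  using assms by (subst nn_integral_cmult_indicator) (auto simp: emeasure_QT mult.commute)

text \<open>Average over the centres \<open>z \<in> Q\<^sub>T\<close>: since \<open>|z| \<le> T \<surd>d\<close>, the ball around \<open>0\<close> is
  squeezed between balls around \<open>z\<close> whose radii differ by \<open>T \<surd>d\<close>.\<close>
lemma ball_integral_periodic_upper:
  fixes G :: "'a::euclidean_space \<Rightarrow> ennreal"
  assumes G: "G \<in> borel_measurable borel" and T: "T > 0"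
    and per: "\<forall>b\<in>Basis. \<forall>h. G (h + T *\<^sub>R b) = G h"
    and A: "(\<integral>\<^sup>+h\<in>QT T. G h \<partial>lborel) = ennreal A" "A \<ge> 0" and \<rho>: "\<rho> \<ge> 0"
  shows "(\<integral>\<^sup>+h\<in>ball 0 \<rho>. G h \<partial>lborel)
       \<le> ennreal (A * measure lborel (ball (0::'a) 1) / T ^ DIM('a) * (\<rho> + T * sqrt DIM('a)) ^ DIM('a))"
proof -
  let ?D = "T * sqrt DIM('a)" and ?\<omega> = "measure lborel (ball (0::'a) 1)"
  have "ennreal (T ^ DIM('a)) * (\<integral>\<^sup>+h\<in>ball 0 \<rho>. G h \<partial>lborel)
      = (\<integral>\<^sup>+(z::'a)\<in>QT T. (\<integral>\<^sup>+h\<in>ball 0 \<rho>. G h \<partial>lborel) \<partial>lborel)"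
    using T by (simp add: nn_integral_QT_const)
  also have "\<dots> \<le> (\<integral>\<^sup>+z\<in>QT T. (\<integral>\<^sup>+y\<in>ball z (\<rho> + ?D). G y \<partial>lborel) \<partial>lborel)"
  proof (rule nn_integral_mono)
    fix z :: 'a
    have "ball 0 \<rho> \<subseteq> ball z (\<rho> + ?D)" if "z \<in> QT T"
    proof
      fix y :: 'a assume "y \<in> ball 0 \<rho>"
      moreover have "norm (z - y) \<le> norm z + norm y"
        by (rule norm_triangle_ineq4)
      ultimately show "y \<in> ball z (\<rho> + ?D)"
        using norm_le_of_mem_QT[OF that] T by (simp add: dist_norm)
    qed
    then show "(\<integral>\<^sup>+h\<in>ball 0 \<rho>. G h \<partial>lborel) * indicator (QT T) z
        \<le> (\<integral>\<^sup>+y\<in>ball z (\<rho> + ?D). G y \<partial>lborel) * indicator (QT T) z"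
      by (auto simp: subset_iff intro!: nn_integral_mono split: split_indicator)
  qed
  also have "\<dots> = ennreal (A * ((\<rho> + ?D) ^ DIM('a) * ?\<omega>))"
    using T \<rho> A by (simp add: nn_integral_QT_ball_periodic[OF G T per] ennreal_mult)
  finally show ?thesis
    using T by (simp add: ennreal_le_divide_iff mult_ac)
qed

lemma ball_integral_periodic_lower:
  fixes G :: "'a::euclidean_space \<Rightarrow> ennreal"
  assumes G: "G \<in> borel_measurable borel" and T: "T > 0"
    and per: "\<forall>b\<in>Basis. \<forall>h. G (h + T *\<^sub>R b) = G h"
    and A: "(\<integral>\<^sup>+h\<in>QT T. G h \<partial>lborel) = ennreal A" "A \<ge> 0" and \<rho>: "\<rho> \<ge> T * sqrt DIM('a)"
  shows "ennreal (A * measure lborel (ball (0::'a) 1) / T ^ DIM('a) * (\<rho> - T * sqrt DIM('a)) ^ DIM('a))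
       \<le> (\<integral>\<^sup>+h\<in>ball 0 \<rho>. G h \<partial>lborel)"
proof -
  let ?D = "T * sqrt DIM('a)" and ?\<omega> = "measure lborel (ball (0::'a) 1)"
  have "ennreal (A * ((\<rho> - ?D) ^ DIM('a) * ?\<omega>)) = (\<integral>\<^sup>+z\<in>QT T. (\<integral>\<^sup>+y\<in>ball z (\<rho> - ?D). G y \<partial>lborel) \<partial>lborel)"
    using T \<rho> A by (simp add: nn_integral_QT_ball_periodic[OF G T per] ennreal_mult)
  also have "\<dots> \<le> (\<integral>\<^sup>+(z::'a)\<in>QT T. (\<integral>\<^sup>+h\<in>ball 0 \<rho>. G h \<partial>lborel) \<partial>lborel)"
  proof (rule nn_integral_mono)
    fix z :: 'a
    have "ball z (\<rho> - ?D) \<subseteq> ball 0 \<rho>" if "z \<in> QT T"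
    proof
      fix y assume "y \<in> ball z (\<rho> - ?D)"
      moreover have "norm y \<le> norm z + norm (y - z)"
        by (rule norm_triangle_sub)
      ultimately show "y \<in> ball 0 \<rho>"
        using norm_le_of_mem_QT[OF that] T by (simp add: dist_norm norm_minus_commute)
    qed
    then show "(\<integral>\<^sup>+y\<in>ball z (\<rho> - ?D). G y \<partial>lborel) * indicator (QT T) z
        \<le> (\<integral>\<^sup>+h\<in>ball 0 \<rho>. G h \<partial>lborel) * indicator (QT T) z"
      by (auto simp: subset_iff intro!: nn_integral_mono split: split_indicator)
  qed
  also have "\<dots> = ennreal (T ^ DIM('a)) * (\<integral>\<^sup>+h\<in>ball 0 \<rho>. G h \<partial>lborel)"
    using T by (simp add: nn_integral_QT_const)
  finally show ?thesis
    using T by (simp add: ennreal_divide_le_iff mult_ac)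
qed

section \<open>Singular integrals of functions of polynomial growth\<close>

lemma nn_integral_powr_tail:
  assumes "r > 0" "b > 0"
  shows "(\<integral>\<^sup>+t\<in>{r..}. ennreal (t powr (-b-1)) \<partial>lborel) = ennreal (r powr (-b) / b)"
proof -
  have "((\<lambda>x. x powr (-b-1)) has_integral -(r powr (-b-1+1)) / (-b-1+1)) {r..}"
    using assms by (intro has_integral_powr_to_inf) auto
  then have "((\<lambda>x. x powr (-b-1)) has_integral r powr (-b) / b) {r..}"
    by simp
  then show ?thesis
    by (rule nn_integral_has_integral_lebesgue'[rotated]) auto
qed

lemma nn_integral_powr_tail_density:
  assumes "r > 0" "a > 0"
  shows "(\<integral>\<^sup>+t\<in>{r..}. ennreal (a * t powr (-a-1)) \<partial>lborel) = ennreal (r powr (-a))"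
proof -
  have "(\<integral>\<^sup>+t\<in>{r..}. ennreal (a * t powr (-a-1)) \<partial>lborel)
      = ennreal a * (\<integral>\<^sup>+t\<in>{r..}. ennreal (t powr (-a-1)) \<partial>lborel)"
    using assms by (subst nn_integral_cmult[symmetric]) (auto intro!: nn_integral_cong simp: ennreal_mult mult_ac)
  also have "\<dots> = ennreal (r powr (-a))"
    using assms by (simp add: nn_integral_powr_tail ennreal_mult[symmetric])
  finally show ?thesis .
qed

lemma powr_minus_mult_power:
  assumes "t > 0"
  shows "t powr (-(real d + e) - 1) * t ^ d = t powr (-e - 1)"
  using assms by (simp add: powr_realpow[symmetric] powr_add[symmetric])

lemma pred_mem_atLeast [measurable (raw)]:
  fixes f g :: "'a \<Rightarrow> real"
  assumes [measurable]: "f \<in> borel_measurable M" "g \<in> borel_measurable M"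
  shows "Measurable.pred M (\<lambda>x. f x \<in> {g x..})"
  unfolding atLeast_iff by measurable

definition annulus_integral :: "('a::euclidean_space \<Rightarrow> ennreal) \<Rightarrow> real \<Rightarrow> ennreal" where
  "annulus_integral G t = (\<integral>\<^sup>+h\<in>{h. 1 \<le> norm h \<and> norm h \<le> t}. G h \<partial>lborel)"

lemma annulus_integral_measurable [measurable]:
  assumes [measurable]: "G \<in> borel_measurable borel"
  shows "annulus_integral G \<in> borel_measurable borel"
  unfolding annulus_integral_def by measurable

lemma mono_annulus_integral: "mono (annulus_integral G)"
  unfolding annulus_integral_def by (intro monoI nn_integral_mono) (auto split: split_indicator)

lemma annulus_integral_le_ball_integral:
  "annulus_integral G t \<le> (\<integral>\<^sup>+h\<in>ball 0 (t + 1). G h \<partial>lborel)"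
  unfolding annulus_integral_def by (intro nn_integral_mono) (auto split: split_indicator)

lemma ball_integral_le_annulus_integral:
  fixes G :: "'a::euclidean_space \<Rightarrow> ennreal"
  assumes [measurable]: "G \<in> borel_measurable borel"
  shows "(\<integral>\<^sup>+h\<in>ball 0 t. G h \<partial>lborel) \<le> annulus_integral G t + (\<integral>\<^sup>+h\<in>ball 0 1. G h \<partial>lborel)"
proof -
  have "(\<integral>\<^sup>+h\<in>ball 0 t. G h \<partial>lborel)
      \<le> (\<integral>\<^sup>+h. G h * indicator {h. 1 \<le> norm h \<and> norm h \<le> t} h + G h * indicator (ball 0 1) h \<partial>lborel)"
    by (intro nn_integral_mono) (auto split: split_indicator)
  also have "\<dots> = annulus_integral G t + (\<integral>\<^sup>+h\<in>ball 0 1. G h \<partial>lborel)"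
    unfolding annulus_integral_def by (rule nn_integral_add) measurable
  finally show ?thesis .
qed

lemma layer_cake_norm_powr:
  fixes G :: "'a::euclidean_space \<Rightarrow> ennreal"
  assumes G[measurable]: "G \<in> borel_measurable borel" and a: "a > 0"
  shows "(\<integral>\<^sup>+h\<in>{h. 1 \<le> norm h}. G h * ennreal (1 / norm h powr a) \<partial>lborel)
   = (\<integral>\<^sup>+t\<in>{1..}. ennreal (a * t powr (-a-1)) * annulus_integral G t \<partial>lborel)"
proof -
  have radial: "ennreal (1 / norm h powr a) = (\<integral>\<^sup>+t\<in>{norm h..}. ennreal (a * t powr (-a-1)) \<partial>lborel)"
    if "1 \<le> norm h" for h :: 'a
    using that a by (subst nn_integral_powr_tail_density) (auto simp: powr_minus_divide)
  let ?F = "\<lambda>h t. G h * indicator {h. 1 \<le> norm h} h * (ennreal (a * t powr (-a-1)) * indicator {norm h..} t)"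
  have "(\<integral>\<^sup>+h\<in>{h. 1 \<le> norm h}. G h * ennreal (1 / norm h powr a) \<partial>lborel)
      = (\<integral>\<^sup>+h. (\<integral>\<^sup>+t. ?F h t \<partial>lborel) \<partial>lborel)"
    by (intro nn_integral_cong) (auto simp: radial nn_integral_cmult split: split_indicator)
  also have "\<dots> = (\<integral>\<^sup>+t. (\<integral>\<^sup>+h. ?F h t \<partial>lborel) \<partial>lborel)"
    by (rule lborel_pair.Fubini') measurable
  also have "\<dots> = (\<integral>\<^sup>+t\<in>{1..}. ennreal (a * t powr (-a-1)) * annulus_integral G t \<partial>lborel)"
  proof (rule nn_integral_cong)
    fix t :: real
    have "(\<integral>\<^sup>+h. ?F h t \<partial>lborel) = ennreal (a * t powr (-a-1)) * annulus_integral G t"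
      unfolding annulus_integral_def
      by (subst nn_integral_cmult[symmetric]) (auto intro!: nn_integral_cong split: split_indicator simp: mult_ac)
    moreover have "annulus_integral G t = 0" if "\<not> 1 \<le> t"
    proof -
      have "{h::'a. 1 \<le> norm h \<and> norm h \<le> t} = {}"
        using that by auto
      then show ?thesis by (simp add: annulus_integral_def)
    qed
    ultimately show "(\<integral>\<^sup>+h. ?F h t \<partial>lborel) = ennreal (a * t powr (-a-1)) * annulus_integral G t * indicator {1..} t"
      by (cases "1 \<le> t") auto
  qed
  finally show ?thesis .
qed

text \<open>The weight has total mass \<open>1\<close> on \<open>[1, \<infinity>)\<close>, so by monotonicity the range \<open>t < t0\<close>
  costs at most \<open>N t0\<close>.\<close>
lemma powr_weighted_tail_upper:
  fixes N :: "real \<Rightarrow> ennreal" and d :: nat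
  assumes [measurable]: "N \<in> borel_measurable borel" and mono: "mono N"
    and c: "c \<ge> 0" and e: "e > 0" and t0: "t0 \<ge> 1"
    and growth: "\<And>t. t \<ge> t0 \<Longrightarrow> N t \<le> ennreal (c * t ^ d)"
  shows "(\<integral>\<^sup>+t\<in>{1..}. ennreal ((real d + e) * t powr (-(real d + e)-1)) * N t \<partial>lborel)
       \<le> N t0 + ennreal ((real d + e) * c / e)"
proof -
  define a where "a = real d + e"
  have a: "a > 0" using e by (simp add: a_def)
  have pointwise: "ennreal (a * t powr (-a-1)) * N t * indicator {1..} t
      \<le> N t0 * (ennreal (a * t powr (-a-1)) * indicator {1..} t)
       + ennreal (a * c) * (ennreal (t powr (-e-1)) * indicator {t0..} t)" for t
  proof (cases "1 \<le> t")
    case True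
    show ?thesis
    proof (cases "t < t0")
      case True
      with \<open>1 \<le> t\<close> show ?thesis
        using monoD[OF mono, of t t0] by (intro add_increasing2) (auto simp: mult_ac intro!: mult_right_mono)
    next
      case False
      then have "ennreal (a * t powr (-a-1)) * N t \<le> ennreal (a * t powr (-a-1)) * ennreal (c * t ^ d)"
        using growth by (intro mult_left_mono) auto
      also have "\<dots> = ennreal (a * c) * ennreal (t powr (-e-1))"
        using a c \<open>1 \<le> t\<close> powr_minus_mult_power[of t d e]
        by (simp add: ennreal_mult[symmetric] a_def mult_ac)
      finally show ?thesis
        using False \<open>1 \<le> t\<close> by (intro add_increasing) auto
    qed
  qed simp
  have "(\<integral>\<^sup>+t\<in>{1..}. ennreal (a * t powr (-a-1)) * N t \<partial>lborel)
      \<le> (\<integral>\<^sup>+t. N t0 * (ennreal (a * t powr (-a-1)) * indicator {1..} t)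
           + ennreal (a * c) * (ennreal (t powr (-e-1)) * indicator {t0..} t) \<partial>lborel)"
    by (intro nn_integral_mono pointwise)
  also have "\<dots> = N t0 * ennreal (1 powr (-a)) + ennreal (a * c) * ennreal (t0 powr (-e) / e)"
    using a e t0 by (simp add: nn_integral_add nn_integral_cmult nn_integral_powr_tail_density nn_integral_powr_tail)
  also have "\<dots> \<le> N t0 + ennreal (a * c / e)"
    using a c e t0 powr_mono[of "-e" 0 t0]
    by (auto simp: ennreal_mult[symmetric] intro!: add_left_mono ennreal_leI divide_right_mono mult_left_le)
  finally show ?thesis by (simp add: a_def)
qed

lemma powr_weighted_tail_lower:
  fixes N :: "real \<Rightarrow> ennreal" and d :: nat
  assumes [measurable]: "N \<in> borel_measurable borel"
    and c: "c \<ge> 0" and e: "e > 0" and t0: "t0 \<ge> 1"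
    and growth: "\<And>t. t \<ge> t0 \<Longrightarrow> ennreal (c * t ^ d) \<le> N t + C"
  shows "ennreal ((real d + e) * c * t0 powr (-e) / e)
       \<le> (\<integral>\<^sup>+t\<in>{1..}. ennreal ((real d + e) * t powr (-(real d + e)-1)) * N t \<partial>lborel) + C"
proof -
  define a where "a = real d + e"
  have a: "a > 0" using e by (simp add: a_def)
  have pointwise: "ennreal (a * c) * (ennreal (t powr (-e-1)) * indicator {t0..} t)
      \<le> ennreal (a * t powr (-a-1)) * N t * indicator {t0..} t
         + ennreal (a * t powr (-a-1)) * indicator {t0..} t * C"
    for t
  proof (cases "t0 \<le> t")
    case True
    then have "ennreal (a * c) * ennreal (t powr (-e-1)) = ennreal (a * t powr (-a-1)) * ennreal (c * t ^ d)"
      using a c t0 powr_minus_mult_power[of t d e]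
      by (simp add: ennreal_mult[symmetric] a_def mult_ac)
    also have "\<dots> \<le> ennreal (a * t powr (-a-1)) * (N t + C)"
      using growth[OF True] by (rule mult_left_mono) simp
    finally show ?thesis
      using True by (simp add: distrib_left distrib_right mult_ac)
  qed simp
  have "ennreal (a * c * t0 powr (-e) / e)
      = (\<integral>\<^sup>+t. ennreal (a * c) * (ennreal (t powr (-e-1)) * indicator {t0..} t) \<partial>lborel)"
    using a c e t0 by (simp add: nn_integral_cmult nn_integral_powr_tail ennreal_mult[symmetric])
  also have "\<dots> \<le> (\<integral>\<^sup>+t. ennreal (a * t powr (-a-1)) * N t * indicator {t0..} t
      + ennreal (a * t powr (-a-1)) * indicator {t0..} t * C \<partial>lborel)"
    by (rule nn_integral_mono[OF pointwise])
  also have "\<dots> = (\<integral>\<^sup>+t\<in>{t0..}. ennreal (a * t powr (-a-1)) * N t \<partial>lborel) + ennreal (t0 powr (-a)) * C"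
    using a t0 by (simp add: nn_integral_add nn_integral_multc nn_integral_powr_tail_density)
  also have "\<dots> \<le> (\<integral>\<^sup>+t\<in>{1..}. ennreal (a * t powr (-a-1)) * N t \<partial>lborel) + C"
    using a t0 powr_mono[of "-a" 0 t0] mult_right_mono[of "ennreal (t0 powr (-a))" 1 C]
    by (intro add_mono nn_integral_mono) (auto split: split_indicator)
  finally show ?thesis by (simp add: a_def)
qed

definition singular_tail :: "('a::euclidean_space \<Rightarrow> ennreal) \<Rightarrow> real \<Rightarrow> ennreal" where
  "singular_tail G e = (\<integral>\<^sup>+h\<in>{h. 1 \<le> norm h}. G h * ennreal (1 / norm h powr (real DIM('a) + e)) \<partial>lborel)"

lemma singular_tail_le_singular_integral: "singular_tail G e \<le> singular_integral G e"
  unfolding singular_tail_def singular_integral_def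
  by (intro nn_integral_mono) (auto split: split_indicator)

lemma singular_integral_le_tail:
  fixes G :: "'a::euclidean_space \<Rightarrow> ennreal"
  assumes [measurable]: "G \<in> borel_measurable borel" and e: "0 < e" "e \<le> \<delta>"
  shows "singular_integral G e \<le> singular_integral G \<delta> + singular_tail G e"
proof -
  let ?k = "\<lambda>e h. ennreal (1 / norm h powr (real DIM('a) + e))"
  have near: "G h * ?k e h * indicator {h. norm h < 1} h \<le> G h * ?k \<delta> h" for h
  proof (cases "norm h < 1 \<and> h \<noteq> 0")
    case True
    then have "norm h powr (real DIM('a) + \<delta>) \<le> norm h powr (real DIM('a) + e)"
      using e by (intro powr_mono') auto
    then show ?thesis
      using True by (auto intro!: mult_left_mono ennreal_leI divide_left_mono)
  qed (auto split: split_indicator)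
  have "singular_integral G e
      = (\<integral>\<^sup>+h. G h * ?k e h * indicator {h. norm h < 1} h + G h * ?k e h * indicator {h. 1 \<le> norm h} h \<partial>lborel)"
    unfolding singular_integral_def by (intro nn_integral_cong) (auto split: split_indicator)
  also have "\<dots> = (\<integral>\<^sup>+h. G h * ?k e h * indicator {h. norm h < 1} h \<partial>lborel) + singular_tail G e"
    unfolding singular_tail_def by (rule nn_integral_add) measurable
  also have "\<dots> \<le> singular_integral G \<delta> + singular_tail G e"
    unfolding singular_integral_def by (intro add_right_mono nn_integral_mono near)
  finally show ?thesis .
qed

lemma singular_tail_eq_layer_cake:
  fixes G :: "'a::euclidean_space \<Rightarrow> ennreal"
  assumes "G \<in> borel_measurable borel" "e > 0"
  shows "singular_tail G e = (\<integral>\<^sup>+t\<in>{1..}. ennreal ((real DIM('a) + e) * t powr (-(real DIM('a) + e)-1))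
      * annulus_integral G t \<partial>lborel)"
  unfolding singular_tail_def using assms by (intro layer_cake_norm_powr) auto

lemma scaled_singular_tail_upper:
  fixes G :: "'a::euclidean_space \<Rightarrow> ennreal"
  assumes G: "G \<in> borel_measurable borel" and K: "K \<ge> 0" and D: "D \<ge> 0"
    and ball_upper: "\<And>\<rho>. \<rho> \<ge> 0 \<Longrightarrow> (\<integral>\<^sup>+h\<in>ball 0 \<rho>. G h \<partial>lborel) \<le> ennreal (K * (\<rho> + D) ^ DIM('a))"
    and e: "e > 0" and t0: "t0 \<ge> 1"
  shows "ennreal e * singular_tail G e
       \<le> ennreal (e * K * (t0 + 1 + D) ^ DIM('a) + (real DIM('a) + e) * K * ((t0 + 1 + D) / t0) ^ DIM('a))"
proof -
  define \<rho> where "\<rho> = (t0 + 1 + D) / t0"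
  have annulus: "annulus_integral G t \<le> ennreal (K * (t + 1 + D) ^ DIM('a))" if "t \<ge> 0" for t
    using annulus_integral_le_ball_integral[of G t] ball_upper[of "t + 1"] that by (simp add: add.assoc)
  have "annulus_integral G t \<le> ennreal (K * \<rho> ^ DIM('a) * t ^ DIM('a))" if "t \<ge> t0" for t
  proof -
    have "t + 1 + D \<le> \<rho> * t"
      using that t0 mult_left_mono[OF that D] by (simp add: \<rho>_def field_simps)
    then have "K * (t + 1 + D) ^ DIM('a) \<le> K * \<rho> ^ DIM('a) * t ^ DIM('a)"
      using that t0 D K by (simp add: mult.assoc power_mult_distrib[symmetric] mult_left_mono power_mono)
    then show ?thesis
      using annulus[of t] that t0 by (auto intro: order.trans ennreal_leI)
  qed
  then have "singular_tail G e \<le> annulus_integral G t0 + ennreal ((real DIM('a) + e) * (K * \<rho> ^ DIM('a)) / e)"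
    unfolding singular_tail_eq_layer_cake[OF G e] using G K D t0 e
    by (intro powr_weighted_tail_upper mono_annulus_integral) (auto simp: \<rho>_def)
  also have "\<dots> \<le> ennreal (K * (t0 + 1 + D) ^ DIM('a) + (real DIM('a) + e) * (K * \<rho> ^ DIM('a)) / e)"
    using annulus[of t0] t0 K D e by (subst ennreal_plus) (auto simp: \<rho>_def intro!: add_right_mono)
  finally have "ennreal e * singular_tail G e
      \<le> ennreal e * ennreal (K * (t0 + 1 + D) ^ DIM('a) + (real DIM('a) + e) * (K * \<rho> ^ DIM('a)) / e)"
    by (rule mult_left_mono) simp
  also have "\<dots> = ennreal (e * K * (t0 + 1 + D) ^ DIM('a) + (real DIM('a) + e) * K * \<rho> ^ DIM('a))"
    using e K t0 D by (subst ennreal_mult[symmetric]) (auto simp: \<rho>_def distrib_left mult_ac)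
  finally show ?thesis unfolding \<rho>_def .
qed

lemma scaled_singular_tail_lower:
  fixes G :: "'a::euclidean_space \<Rightarrow> ennreal"
  assumes G: "G \<in> borel_measurable borel" and K: "K \<ge> 0" and D: "D \<ge> 0"
    and ball_lower: "\<And>\<rho>. \<rho> \<ge> D \<Longrightarrow> ennreal (K * (\<rho> - D) ^ DIM('a)) \<le> (\<integral>\<^sup>+h\<in>ball 0 \<rho>. G h \<partial>lborel)"
    and e: "e > 0" and t0: "t0 \<ge> 1" "t0 \<ge> D"
  shows "ennreal ((real DIM('a) + e) * K * ((t0 - D) / t0) ^ DIM('a) * t0 powr (-e))
       \<le> ennreal e * singular_tail G e + ennreal e * (\<integral>\<^sup>+h\<in>ball 0 1. G h \<partial>lborel)"
proof -
  define \<sigma> where "\<sigma> = (t0 - D) / t0"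
  have "ennreal (K * \<sigma> ^ DIM('a) * t ^ DIM('a)) \<le> annulus_integral G t + (\<integral>\<^sup>+h\<in>ball 0 1. G h \<partial>lborel)"
    if "t \<ge> t0" for t
  proof -
    have "\<sigma> * t \<le> t - D"
      using that t0 mult_left_mono[OF that D] by (simp add: \<sigma>_def field_simps)
    then have "K * \<sigma> ^ DIM('a) * t ^ DIM('a) \<le> K * (t - D) ^ DIM('a)"
      using that t0 D K by (simp add: mult.assoc power_mult_distrib[symmetric] mult_left_mono power_mono \<sigma>_def)
    then have "ennreal (K * \<sigma> ^ DIM('a) * t ^ DIM('a)) \<le> (\<integral>\<^sup>+h\<in>ball 0 t. G h \<partial>lborel)"
      using ball_lower[of t] that t0 by (auto intro: order.trans ennreal_leI)
    then show ?thesis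
      using ball_integral_le_annulus_integral[OF G, of t] by (rule order.trans)
  qed
  then have "ennreal ((real DIM('a) + e) * (K * \<sigma> ^ DIM('a)) * t0 powr (-e) / e)
      \<le> singular_tail G e + (\<integral>\<^sup>+h\<in>ball 0 1. G h \<partial>lborel)"
    unfolding singular_tail_eq_layer_cake[OF G e]
    using G K D t0 e by (intro powr_weighted_tail_lower) (auto simp: \<sigma>_def)
  then have "ennreal e * ennreal ((real DIM('a) + e) * (K * \<sigma> ^ DIM('a)) * t0 powr (-e) / e)
      \<le> ennreal e * singular_tail G e + ennreal e * (\<integral>\<^sup>+h\<in>ball 0 1. G h \<partial>lborel)"
    by (subst distrib_left[symmetric]) (rule mult_left_mono, auto)
  moreover have "ennreal e * ennreal ((real DIM('a) + e) * (K * \<sigma> ^ DIM('a)) * t0 powr (-e) / e)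
      = ennreal ((real DIM('a) + e) * K * \<sigma> ^ DIM('a) * t0 powr (-e))"
    using e K t0 D by (subst ennreal_mult[symmetric]) (auto simp: \<sigma>_def mult_ac)
  ultimately show ?thesis unfolding \<sigma>_def by simp
qed

lemma scaled_singular_integral_upper:
  fixes G :: "'a::euclidean_space \<Rightarrow> ennreal"
  assumes G: "G \<in> borel_measurable borel" and K: "K \<ge> 0" and D: "D \<ge> 0"
    and ball_upper: "\<And>\<rho>. \<rho> \<ge> 0 \<Longrightarrow> (\<integral>\<^sup>+h\<in>ball 0 \<rho>. G h \<partial>lborel) \<le> ennreal (K * (\<rho> + D) ^ DIM('a))"
    and e: "0 < e" "e \<le> \<delta>" and S: "singular_integral G \<delta> = ennreal S" "S \<ge> 0" and t0: "t0 \<ge> 1"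
  shows "ennreal e * singular_integral G e
       \<le> ennreal (e * S + (e * K * (t0 + 1 + D) ^ DIM('a) + (real DIM('a) + e) * K * ((t0 + 1 + D) / t0) ^ DIM('a)))"
    (is "_ \<le> ennreal (e * S + ?B)")
proof -
  have "ennreal e * singular_integral G e \<le> ennreal e * singular_integral G \<delta> + ennreal e * singular_tail G e"
    using singular_integral_le_tail[OF G e] by (subst distrib_left[symmetric]) (rule mult_left_mono, auto)
  also have "\<dots> \<le> ennreal (e * S) + ennreal ?B"
    using S e t0 by (intro add_mono scaled_singular_tail_upper[OF G K D ball_upper]) (auto simp: ennreal_mult)
  also have "\<dots> = ennreal (e * S + ?B)"
    using S e K D t0 by (subst ennreal_plus) auto
  finally show ?thesis .
qed

lemma scaled_singular_integral_lower:
  fixes G :: "'a::euclidean_space \<Rightarrow> ennreal"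
  assumes G: "G \<in> borel_measurable borel" and K: "K \<ge> 0" and D: "D \<ge> 0"
    and ball_upper: "\<And>\<rho>. \<rho> \<ge> 0 \<Longrightarrow> (\<integral>\<^sup>+h\<in>ball 0 \<rho>. G h \<partial>lborel) \<le> ennreal (K * (\<rho> + D) ^ DIM('a))"
    and ball_lower: "\<And>\<rho>. \<rho> \<ge> D \<Longrightarrow> ennreal (K * (\<rho> - D) ^ DIM('a)) \<le> (\<integral>\<^sup>+h\<in>ball 0 \<rho>. G h \<partial>lborel)"
    and e: "e > 0" and t0: "t0 \<ge> 1" "t0 \<ge> D"
  shows "ennreal ((real DIM('a) + e) * K * ((t0 - D) / t0) ^ DIM('a) * t0 powr (-e) - e * K * (1 + D) ^ DIM('a))
       \<le> ennreal e * singular_integral G e"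
proof -
  have "ennreal ((real DIM('a) + e) * K * ((t0 - D) / t0) ^ DIM('a) * t0 powr (-e))
      \<le> ennreal e * singular_tail G e + ennreal e * (\<integral>\<^sup>+h\<in>ball 0 1. G h \<partial>lborel)"
    by (rule scaled_singular_tail_lower[OF G K D ball_lower e t0])
  also have "\<dots> \<le> ennreal e * singular_integral G e + ennreal (e * K * (1 + D) ^ DIM('a))"
    using ball_upper[of 1] e K D
    by (intro add_mono mult_left_mono singular_tail_le_singular_integral)
      (auto simp: ennreal_mult mult.assoc intro!: mult_left_mono)
  finally show ?thesis
    using e K D by (subst ennreal_minus[symmetric]) (auto simp: ennreal_minus_le_iff add.commute)
qed

lemma tendsto_sandwich_approx:
  fixes f :: "nat \<Rightarrow> real" and U L :: "real \<Rightarrow> nat \<Rightarrow> real" and u l :: "real \<Rightarrow> real"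
  assumes bounds: "\<And>t. t \<ge> \<tau> \<Longrightarrow> eventually (\<lambda>n. L t n \<le> f n \<and> f n \<le> U t n) sequentially"
    and U: "\<And>t. t \<ge> \<tau> \<Longrightarrow> U t \<longlonglongrightarrow> u t" and L: "\<And>t. t \<ge> \<tau> \<Longrightarrow> L t \<longlonglongrightarrow> l t"
    and u: "(u \<longlongrightarrow> c) at_top" and l: "(l \<longlongrightarrow> c) at_top"
  shows "f \<longlonglongrightarrow> c"
proof (rule tendstoI)
  fix r :: real
  assume "r > 0"
  then have r: "r / 2 > 0" by simp
  have "eventually (\<lambda>t. dist (u t) c < r / 2 \<and> dist (l t) c < r / 2 \<and> t \<ge> \<tau>) at_top"
    using tendstoD[OF u r] tendstoD[OF l r] eventually_ge_at_top[of \<tau>] by eventually_elim auto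
  then obtain t where t: "dist (u t) c < r / 2" "dist (l t) c < r / 2" "t \<ge> \<tau>"
    by (auto simp: eventually_at_top_linorder)
  show "eventually (\<lambda>n. dist (f n) c < r) sequentially"
    using bounds[OF t(3)] tendstoD[OF U[OF t(3)] r] tendstoD[OF L[OF t(3)] r]
  proof eventually_elim
    case (elim n)
    then show ?case
      using t unfolding dist_real_def abs_less_iff by linarith
  qed
qed

lemma tendsto_ennreal_sandwich_approx:
  fixes g :: "nat \<Rightarrow> ennreal" and U L :: "real \<Rightarrow> nat \<Rightarrow> real" and u l :: "real \<Rightarrow> real"
  assumes bounds: "\<And>t. t \<ge> \<tau> \<Longrightarrow> eventually (\<lambda>n. ennreal (L t n) \<le> g n \<and> g n \<le> ennreal (U t n)) sequentially"
    and U: "\<And>t. t \<ge> \<tau> \<Longrightarrow> U t \<longlonglongrightarrow> u t" and L: "\<And>t. t \<ge> \<tau> \<Longrightarrow> L t \<longlonglongrightarrow> l t"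
    and u: "(u \<longlongrightarrow> c) at_top" and l: "(l \<longlongrightarrow> c) at_top" and c: "c \<ge> 0"
  shows "g \<longlonglongrightarrow> ennreal c"
proof -
  define f where "f n = enn2real (g n)" for n
  have g_eq: "eventually (\<lambda>n. ennreal (f n) = g n) sequentially"
    using bounds[OF order.refl]
  proof eventually_elim
    case (elim n)
    then have "g n < \<infinity>"
      using le_less_trans by fastforce
    then show ?case by (simp add: f_def)
  qed
  have "f \<longlonglongrightarrow> c"
  proof (rule tendsto_sandwich_approx[where U = "\<lambda>t n. max 0 (U t n)" and u = "\<lambda>t. max 0 (u t)"])
    show "eventually (\<lambda>n. L t n \<le> f n \<and> f n \<le> max 0 (U t n)) sequentially" if "t \<ge> \<tau>" for t
      using bounds[OF that] g_eq
    proof eventually_elim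
      case (elim n)
      then have "ennreal (L t n) \<le> ennreal (f n)" "ennreal (f n) \<le> ennreal (U t n)"
        by simp_all
      moreover have "f n \<ge> 0"
        by (simp add: f_def)
      ultimately show ?case
        by (auto simp: ennreal_le_iff2)
    qed
    show "((\<lambda>t. max 0 (u t)) \<longlongrightarrow> c) at_top"
      using tendsto_max[OF tendsto_const u, of 0] c by (simp add: max_absorb2)
  qed (use U L l in \<open>auto intro: tendsto_max\<close>)
  then show ?thesis
    using g_eq by (rule Lim_transform_eventually[OF tendsto_ennrealI])
qed

lemma tendsto_mult_ratio_power_at_top: "((\<lambda>t::real. c * ((t + a) / t) ^ n) \<longlongrightarrow> c) at_top"
proof -
  have "((\<lambda>t::real. (t + a) / t) \<longlongrightarrow> 1) at_top"
    by real_asymp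
  then have "((\<lambda>t::real. c * ((t + a) / t) ^ n) \<longlongrightarrow> c * 1 ^ n) at_top"
    by (intro tendsto_intros)
  then show ?thesis by simp
qed

text \<open>The part \<open>|h| < 1\<close> stays bounded, so only the tail matters; for each \<open>t \<ge> max 1 D\<close> it is
  squeezed between bounds whose limits as \<open>e \<rightarrow> 0\<close> tend to \<open>d K\<close> as \<open>t \<rightarrow> \<infinity>\<close>.\<close>
lemma tendsto_scaled_singular_integral:
  fixes G :: "'a::euclidean_space \<Rightarrow> ennreal" and \<epsilon> :: "nat \<Rightarrow> real"
  assumes G: "G \<in> borel_measurable borel"
    and \<epsilon>: "\<And>n. \<epsilon> n > 0" "\<epsilon> \<longlonglongrightarrow> 0" and \<delta>: "\<delta> > 0" "singular_integral G \<delta> < \<infinity>"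
    and K: "K \<ge> 0" and D: "D \<ge> 0"
    and ball_upper: "\<And>\<rho>. \<rho> \<ge> 0 \<Longrightarrow> (\<integral>\<^sup>+h\<in>ball 0 \<rho>. G h \<partial>lborel) \<le> ennreal (K * (\<rho> + D) ^ DIM('a))"
    and ball_lower: "\<And>\<rho>. \<rho> \<ge> D \<Longrightarrow> ennreal (K * (\<rho> - D) ^ DIM('a)) \<le> (\<integral>\<^sup>+h\<in>ball 0 \<rho>. G h \<partial>lborel)"
  shows "(\<lambda>n. ennreal (\<epsilon> n) * singular_integral G (\<epsilon> n)) \<longlonglongrightarrow> ennreal (real DIM('a) * K)"
proof -
  let ?d = "real DIM('a)"
  define S where "S = enn2real (singular_integral G \<delta>)"
  have S: "singular_integral G \<delta> = ennreal S" "S \<ge> 0"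
    using \<delta> by (auto simp: S_def less_top[symmetric])
  define U where
    "U t e = e * S + (e * K * (t + 1 + D) ^ DIM('a) + (?d + e) * K * ((t + 1 + D) / t) ^ DIM('a))" for t e
  define L where
    "L t e = (?d + e) * K * ((t - D) / t) ^ DIM('a) * t powr (-e) - e * K * (1 + D) ^ DIM('a)" for t e
  have small: "eventually (\<lambda>n. \<epsilon> n \<le> \<delta>) sequentially"
    using order_tendstoD(2)[OF \<epsilon>(2) \<delta>(1)] by (auto elim: eventually_mono)
  show ?thesis
  proof (rule tendsto_ennreal_sandwich_approx[where \<tau> = "max 1 D"])
    show "eventually (\<lambda>n. ennreal (L t (\<epsilon> n)) \<le> ennreal (\<epsilon> n) * singular_integral G (\<epsilon> n)
        \<and> ennreal (\<epsilon> n) * singular_integral G (\<epsilon> n) \<le> ennreal (U t (\<epsilon> n))) sequentially"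
      if "t \<ge> max 1 D" for t
      using small
    proof eventually_elim
      case (elim n)
      show ?case
        unfolding U_def L_def using elim that \<epsilon>(1)[of n]
        by (auto intro!: scaled_singular_integral_lower[OF G K D ball_upper ball_lower]
            scaled_singular_integral_upper[OF G K D ball_upper _ _ S])
    qed
    have "(\<lambda>n. U t (\<epsilon> n)) \<longlonglongrightarrow> U t 0" for t
      unfolding U_def by (intro tendsto_intros \<epsilon>(2))
    then show "(\<lambda>n. U t (\<epsilon> n)) \<longlonglongrightarrow> ?d * K * ((t + 1 + D) / t) ^ DIM('a)" for t
      by (simp add: U_def)
    have "(\<lambda>n. L t (\<epsilon> n)) \<longlonglongrightarrow> L t 0" if "t \<ge> max 1 D" for t
      unfolding L_def using that by (intro tendsto_intros \<epsilon>(2)) auto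
    then show "(\<lambda>n. L t (\<epsilon> n)) \<longlonglongrightarrow> ?d * K * ((t - D) / t) ^ DIM('a)" if "t \<ge> max 1 D" for t
      using that by (simp add: L_def)
    show "((\<lambda>t. ?d * K * ((t + 1 + D) / t) ^ DIM('a)) \<longlongrightarrow> ?d * K) at_top"
      using tendsto_mult_ratio_power_at_top[of "?d * K" "1 + D"] by (simp add: add.assoc)
    show "((\<lambda>t. ?d * K * ((t - D) / t) ^ DIM('a)) \<longlongrightarrow> ?d * K) at_top"
      using tendsto_mult_ratio_power_at_top[of "?d * K" "- D"] by simp
  qed (use K in simp)
qed

lemma tendsto_scaled_singular_integral_periodic:
  fixes G :: "'a::euclidean_space \<Rightarrow> ennreal" and \<epsilon> :: "nat \<Rightarrow> real"
  assumes G: "G \<in> borel_measurable borel" and T: "T > 0"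
    and per: "\<forall>b\<in>Basis. \<forall>h. G (h + T *\<^sub>R b) = G h"
    and A: "(\<integral>\<^sup>+h\<in>QT T. G h \<partial>lborel) = ennreal A" "A \<ge> 0"
    and \<epsilon>: "\<And>n. \<epsilon> n > 0" "\<epsilon> \<longlonglongrightarrow> 0" and \<delta>: "\<delta> > 0" "singular_integral G \<delta> < \<infinity>"
  shows "(\<lambda>n. ennreal (\<epsilon> n) * singular_integral G (\<epsilon> n))
       \<longlonglongrightarrow> ennreal (real DIM('a) * measure lborel (ball (0::'a) 1) * A / T ^ DIM('a))"
proof -
  have "(\<lambda>n. ennreal (\<epsilon> n) * singular_integral G (\<epsilon> n))
      \<longlonglongrightarrow> ennreal (real DIM('a) * (A * measure lborel (ball (0::'a) 1) / T ^ DIM('a)))"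
    using T A
    by (intro tendsto_scaled_singular_integral[OF G \<epsilon> \<delta> _ _
          ball_integral_periodic_upper[OF G T per A] ball_integral_periodic_lower[OF G T per A]]) auto
  then show ?thesis by (simp add: mult_ac)
qed

lemma Lp_torus_cube_increment:
  fixes u :: "'a::euclidean_space \<Rightarrow> real"
  assumes "Lp_torus T p u" and T: "T > 0" and p: "p > 0"
  obtains G :: "'a \<Rightarrow> ennreal" where "G \<in> borel_measurable borel" "\<forall>b\<in>Basis. \<forall>h. G (h + T *\<^sub>R b) = G h"
    "\<forall>\<sigma>. Fs T p \<sigma> u = singular_integral G (\<sigma> * p)" "F0 T p u = (\<integral>\<^sup>+h\<in>QT T. G h \<partial>lborel)" "F0 T p u < \<infinity>"
proof -
  obtain v where v[measurable]: "v \<in> borel_measurable borel" and uv: "AE x in lborel. u x = v x"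
    and per: "\<forall>b\<in>Basis. AE z in lborel. v (z + T *\<^sub>R b) = v z"
    and Lp: "(\<integral>\<^sup>+x\<in>QT T. ennreal (\<bar>v x\<bar> powr p) \<partial>lborel) < \<infinity>"
    using assms(1) by (rule Lp_torus_borel_representative)
  show ?thesis
  proof (rule that[of "cube_increment T p v"])
    show "\<forall>b\<in>Basis. \<forall>h. cube_increment T p v (h + T *\<^sub>R b) = cube_increment T p v h"
      using per by (simp add: cube_increment_periodic)
    show "\<forall>\<sigma>. Fs T p \<sigma> u = singular_integral (cube_increment T p v) (\<sigma> * p)"
      unfolding Fs_cong_AE[OF uv] by (simp add: Fs_eq_singular_integral)
    show "F0 T p u = (\<integral>\<^sup>+h\<in>QT T. cube_increment T p v h \<partial>lborel)"
      unfolding F0_cong_AE[OF uv] by (rule F0_eq_cube_increment[OF v T per])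
    show "F0 T p u < \<infinity>"
      unfolding F0_cong_AE[OF uv] by (rule F0_finite[OF v T p Lp])
  qed simp
qed

theorem mainTheorem2:
  fixes u :: "'a::euclidean_space \<Rightarrow> real" and s :: "nat \<Rightarrow> real" and T p :: real
  assumes "T > 0" and "p \<ge> 1"
    and "\<forall>n. 0 < s n \<and> s n < 1"
    and "s \<longlonglongrightarrow> 0"
    and "W_torus T (s 0) p u"
  shows "(\<lambda>n. ennreal (s n) * Fs T p (s n) u) \<longlonglongrightarrow>
           ennreal (real DIM('a) * measure lborel (ball (0::'a) 1) / (p * T ^ DIM('a))) * F0 T p u"
proof -
  have T: "T > 0" and p: "p > 0" and s: "\<And>n. s n > 0"
    using assms(1-3) by auto
  have "Lp_torus T p u"
    using assms(5) by (simp add: W_torus_def)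
  then obtain G :: "'a \<Rightarrow> ennreal" where G: "G \<in> borel_measurable borel" "\<forall>b\<in>Basis. \<forall>h. G (h + T *\<^sub>R b) = G h"
    and Fs_G: "\<forall>\<sigma>. Fs T p \<sigma> u = singular_integral G (\<sigma> * p)"
    and F0_G: "F0 T p u = (\<integral>\<^sup>+h\<in>QT T. G h \<partial>lborel)" "F0 T p u < \<infinity>"
    by (rule Lp_torus_cube_increment[OF _ T p])
  define A where "A = enn2real (F0 T p u)"
  have A: "F0 T p u = ennreal A" "A \<ge> 0"
    using F0_G(2) by (auto simp: A_def less_top[symmetric])
  let ?c = "real DIM('a) * measure lborel (ball (0::'a) 1) * A / T ^ DIM('a)"
  have "(\<lambda>n. ennreal (s n * p) * singular_integral G (s n * p)) \<longlonglongrightarrow> ennreal ?c"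
    using assms(5) A F0_G(1) s p tendsto_mult_left_zero[OF assms(4), of p]
    by (intro tendsto_scaled_singular_integral_periodic[OF G(1) T G(2), where \<delta> = "s 0 * p"])
      (auto simp: W_torus_def Fs_G)
  then have "(\<lambda>n. ennreal (1 / p) * (ennreal (s n * p) * singular_integral G (s n * p)))
      \<longlonglongrightarrow> ennreal (1 / p) * ennreal ?c"
    by (rule ennreal_tendsto_cmult[rotated]) simp
  moreover have "ennreal (1 / p) * ennreal (s n * p) = ennreal (s n)" for n
    using p s[of n] by (simp add: ennreal_mult[symmetric])
  moreover have "ennreal (1 / p) * ennreal ?c
      = ennreal (real DIM('a) * measure lborel (ball (0::'a) 1) / (p * T ^ DIM('a))) * ennreal A"
    using p T A(2) by (simp add: ennreal_mult[symmetric])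
  ultimately show ?thesis
    by (simp add: Fs_G A(1) mult.assoc[symmetric])
qed

end
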